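(* Let $\mathcal{A}$ and $\mathcal{B}$ be semi-classical test spaces with outcome sets $X,Y$, and let $\omega$ be a probability weight on $\mathcal{A}\times\mathcal{B}$. If $\omega$ is both non-signaling and dispersion-free, then $\omega=\alpha\otimes\beta$, i.e. $\omega(x,y)=\alpha(x)\beta(y)$ for all $x\in X,y\in Y$, where $\alpha$ and $\beta$ are dispersion-free probability weights on $\mathcal{A}$ and $\mathcal{B}$ respectively.
   Context: A test space is an irredundant collection of nonempty sets (tests); it is semi-classical if distinct tests are disjoint. A probability weight is a function into $[0,1]$ summing to $1$ over each test; it is dispersion-free if it takes only the values $0$ and $1$. $\mathcal{A}\times\mathcal{B}=\{E\times F:E\in\mathcal{A},F\in\mathcal{B}\}$. A probability weight $\omega$ on $\mathcal{A}\times\mathcal{B}$ is non-signaling if $\sum_{x\in E}\omega(x,y)$ is independent of $E\in\mathcal{A}$ for each $y$ and $\sum_{y\in F}\omega(x,y)$ is independent of $F\in\mathcal{B}$ for each $x$. *)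

theory Defs
  imports "HOL-Analysis.Analysis"
begin

definition test_space :: "'a set set \<Rightarrow> bool" where
  "test_space \<A> \<longleftrightarrow> (\<forall>E\<in>\<A>. E \<noteq> {}) \<and> (\<forall>E\<in>\<A>. \<forall>F\<in>\<A>. E \<subseteq> F \<longrightarrow> E = F)"

definition outcomes :: "'a set set \<Rightarrow> 'a set" where
  "outcomes \<A> = \<Union>\<A>"

definition semi_classical :: "'a set set \<Rightarrow> bool" where
  "semi_classical \<A> \<longleftrightarrow> test_space \<A> \<and> (\<forall>E\<in>\<A>. \<forall>F\<in>\<A>. E \<noteq> F \<longrightarrow> E \<inter> F = {})"

definition prob_weight :: "'a set set \<Rightarrow> ('a \<Rightarrow> real) \<Rightarrow> bool" where
  "prob_weight \<A> w \<longleftrightarrow> (\<forall>x\<in>outcomes \<A>. 0 \<le> w x \<and> w x \<le> 1) \<and> (\<forall>E\<in>\<A>. (w has_sum 1) E)"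

definition dispersion_free :: "'a set set \<Rightarrow> ('a \<Rightarrow> real) \<Rightarrow> bool" where
  "dispersion_free \<A> w \<longleftrightarrow> prob_weight \<A> w \<and> (\<forall>x\<in>outcomes \<A>. w x = 0 \<or> w x = 1)"

definition prod_ts :: "'a set set \<Rightarrow> 'b set set \<Rightarrow> ('a \<times> 'b) set set" where
  "prod_ts \<A> \<B> = {E \<times> F | E F. E \<in> \<A> \<and> F \<in> \<B>}"

definition non_signaling :: "'a set set \<Rightarrow> 'b set set \<Rightarrow> ('a \<times> 'b \<Rightarrow> real) \<Rightarrow> bool" where
  "non_signaling \<A> \<B> \<omega> \<longleftrightarrow>
     (\<forall>y\<in>outcomes \<B>. \<forall>E\<in>\<A>. \<forall>E'\<in>\<A>.
        (\<Sum>\<^sub>\<infinity>x\<in>E. \<omega> (x, y)) = (\<Sum>\<^sub>\<infinity>x\<in>E'. \<omega> (x, y))) \<and>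
     (\<forall>x\<in>outcomes \<A>. \<forall>F\<in>\<B>. \<forall>F'\<in>\<B>.
        (\<Sum>\<^sub>\<infinity>y\<in>F. \<omega> (x, y)) = (\<Sum>\<^sub>\<infinity>y\<in>F'. \<omega> (x, y)))"

end

theory Submission
  imports Defs
begin

text \<open>A dispersion-free weight on a test is the indicator of a single outcome, so on every
  rectangle \<open>E \<times> F\<close> the weight \<open>\<omega>\<close> is the point mass at some \<open>(a, b)\<close> and its marginals
  on \<open>E\<close> and \<open>F\<close> are the point masses at \<open>a\<close> and \<open>b\<close>. Non-signaling makes these marginals
  independent of the other test, which yields the global factors \<open>\<alpha>\<close> and \<open>\<beta>\<close>.\<close>

lemma has_sum_indicator_singleton:
  assumes "a \<in> S"
  shows "(indicator {a} has_sum (1::'b::{topological_space, comm_monoid_add, zero_neq_one})) S"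
proof -
  have "(indicator {a} has_sum (1::'b)) {a}"
    using has_sum_finite[of "{a}" "indicator {a}"] by simp
  then show ?thesis
    by (rule has_sum_cong_neutral[THEN iffD1, rotated -1]) (use assms in auto)
qed

lemma zero_one_has_sum_one_iff:
  fixes f :: "'c \<Rightarrow> real"
  shows "(f has_sum 1) S \<and> (\<forall>s\<in>S. f s = 0 \<or> f s = 1) \<longleftrightarrow> (\<exists>a\<in>S. \<forall>s\<in>S. f s = indicator {a} s)"
proof
  assume f: "(f has_sum 1) S \<and> (\<forall>s\<in>S. f s = 0 \<or> f s = 1)"
  have "\<exists>a\<in>S. f a = 1"
  proof (rule ccontr)
    assume "\<not> (\<exists>a\<in>S. f a = 1)"
    with f have "(f has_sum 0) S" by (intro has_sum_0) blast
    with f show False using has_sum_unique by fastforce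
  qed
  then obtain a where a: "a \<in> S" "f a = 1" by blast
  have "f b = 0" if b: "b \<in> S" "b \<noteq> a" for b
  proof (rule ccontr)
    assume "f b \<noteq> 0"
    with f b have "f b = 1" by blast
    have "(f has_sum sum f {a, b}) {a, b}" by simp
    \<comment> \<open>a finite partial sum of nonnegative terms cannot exceed the total\<close>
    then have "sum f {a, b} \<le> 1"
      by (rule has_sum_mono_neutral) (use f a b in force)+
    with a b \<open>f b = 1\<close> show False by simp
  qed
  with a show "\<exists>a\<in>S. \<forall>s\<in>S. f s = indicator {a} s"
    by (intro bexI[of _ a]) (auto simp: indicator_def)
next
  assume "\<exists>a\<in>S. \<forall>s\<in>S. f s = indicator {a} s"
  then obtain a where a: "a \<in> S" and f: "\<forall>s\<in>S. f s = indicator {a} s" by blast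
  have "(f has_sum 1) S \<longleftrightarrow> (indicator {a} has_sum (1::real)) S"
    using f by (intro has_sum_cong) simp
  with has_sum_indicator_singleton[OF a] have "(f has_sum 1) S" by simp
  with f show "(f has_sum 1) S \<and> (\<forall>s\<in>S. f s = 0 \<or> f s = 1)"
    by (simp add: indicator_def)
qed

lemma dispersion_free_iff:
  "dispersion_free \<A> w \<longleftrightarrow> (\<forall>E\<in>\<A>. \<exists>a\<in>E. \<forall>x\<in>E. w x = indicator {a} x)"
  unfolding dispersion_free_def prob_weight_def outcomes_def zero_one_has_sum_one_iff[symmetric]
  by fastforce

lemma semi_classical_ex_dispersion_free:
  assumes "semi_classical \<A>"
  shows "\<exists>\<alpha>. dispersion_free \<A> \<alpha>"
proof -
  define choice where "choice E = (SOME x. x \<in> E)" for E :: "'a set"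
  have choice: "choice E \<in> E" if "E \<in> \<A>" for E
    using assms that unfolding semi_classical_def test_space_def choice_def by (simp add: some_in_eq)
  have disjoint: "E \<inter> F = {}" if "E \<in> \<A>" "F \<in> \<A>" "E \<noteq> F" for E F
    using assms that unfolding semi_classical_def by blast
  have "indicator (choice ` \<A>) x = (indicator {choice E} x :: real)" if "E \<in> \<A>" "x \<in> E" for E x
    using that choice disjoint by (auto simp: indicator_def)
  with choice have "dispersion_free \<A> (indicator (choice ` \<A>))"
    unfolding dispersion_free_iff by metis
  then show ?thesis by blast
qed

lemma dispersion_free_prod_ts_rectangle:
  assumes "dispersion_free (prod_ts \<A> \<B>) \<omega>" "E \<in> \<A>" "F \<in> \<B>"
  obtains a b where "a \<in> E" "b \<in> F" "\<forall>x\<in>E. \<forall>y\<in>F. \<omega> (x, y) = indicator {a} x * indicator {b} y"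
proof -
  have "E \<times> F \<in> prod_ts \<A> \<B>" unfolding prod_ts_def using assms by blast
  with assms(1) obtain p where "p \<in> E \<times> F" "\<forall>q\<in>E \<times> F. \<omega> q = indicator {p} q"
    unfolding dispersion_free_iff by blast
  then show ?thesis
    by (intro that[of "fst p" "snd p"]) (auto simp: indicator_def)
qed

lemma infsum_indicator_singleton_cmult:
  fixes c :: real
  assumes "b \<in> F"
  shows "(\<Sum>\<^sub>\<infinity>y\<in>F. c * indicator {b} y) = c"
  using has_sum_cmult_right[OF has_sum_indicator_singleton[OF assms], of c] by (simp add: infsumI)

lemma non_signaling_dispersion_free_rectangle:
  assumes "dispersion_free (prod_ts \<A> \<B>) \<omega>" "non_signaling \<A> \<B> \<omega>"
    and "E \<in> \<A>" "F \<in> \<B>" "E0 \<in> \<A>" "F0 \<in> \<B>"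
  obtains a b where "a \<in> E" "b \<in> F"
    "\<forall>x\<in>E. (\<Sum>\<^sub>\<infinity>y\<in>F0. \<omega> (x, y)) = indicator {a} x"
    "\<forall>y\<in>F. (\<Sum>\<^sub>\<infinity>x\<in>E0. \<omega> (x, y)) = indicator {b} y"
    "\<forall>x\<in>E. \<forall>y\<in>F. \<omega> (x, y) = indicator {a} x * indicator {b} y"
proof -
  obtain a b where ab: "a \<in> E" "b \<in> F"
    and \<omega>: "\<forall>x\<in>E. \<forall>y\<in>F. \<omega> (x, y) = indicator {a} x * indicator {b} y"
    using dispersion_free_prod_ts_rectangle assms(1,3,4) by blast
  have "(\<Sum>\<^sub>\<infinity>y\<in>F0. \<omega> (x, y)) = indicator {a} x" if x: "x \<in> E" for x
  proof -
    have "x \<in> outcomes \<A>" unfolding outcomes_def using assms(3) x by blast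
    then have "(\<Sum>\<^sub>\<infinity>y\<in>F0. \<omega> (x, y)) = (\<Sum>\<^sub>\<infinity>y\<in>F. \<omega> (x, y))"
      using assms(2,4,6) unfolding non_signaling_def by blast
    also have "\<dots> = (\<Sum>\<^sub>\<infinity>y\<in>F. indicator {a} x * indicator {b} y)"
      using \<omega> x by (intro infsum_cong) simp
    also have "\<dots> = indicator {a} x"
      using ab(2) by (rule infsum_indicator_singleton_cmult)
    finally show ?thesis .
  qed
  moreover have "(\<Sum>\<^sub>\<infinity>x\<in>E0. \<omega> (x, y)) = indicator {b} y" if y: "y \<in> F" for y
  proof -
    have "y \<in> outcomes \<B>" unfolding outcomes_def using assms(4) y by blast
    then have "(\<Sum>\<^sub>\<infinity>x\<in>E0. \<omega> (x, y)) = (\<Sum>\<^sub>\<infinity>x\<in>E. \<omega> (x, y))"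
      using assms(2,3,5) unfolding non_signaling_def by blast
    also have "\<dots> = (\<Sum>\<^sub>\<infinity>x\<in>E. indicator {b} y * indicator {a} x)"
      using \<omega> y by (intro infsum_cong) simp
    also have "\<dots> = indicator {b} y"
      using ab(1) by (rule infsum_indicator_singleton_cmult)
    finally show ?thesis .
  qed
  ultimately show ?thesis using that ab \<omega> by blast
qed

theorem lemma3p7:
  fixes \<A> :: "'a set set" and \<B> :: "'b set set" and \<omega> :: "'a \<times> 'b \<Rightarrow> real"
  assumes "semi_classical \<A>" and "semi_classical \<B>"
    and "prob_weight (prod_ts \<A> \<B>) \<omega>"
    and "non_signaling \<A> \<B> \<omega>"
    and "dispersion_free (prod_ts \<A> \<B>) \<omega>"
  shows "\<exists>\<alpha> \<beta>. dispersion_free \<A> \<alpha> \<and> dispersion_free \<B> \<beta> \<and>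
           (\<forall>x\<in>outcomes \<A>. \<forall>y\<in>outcomes \<B>. \<omega> (x, y) = \<alpha> x * \<beta> y)"
proof (cases "\<A> = {} \<or> \<B> = {}")
  case True
  \<comment> \<open>then \<open>\<omega>\<close> constrains nothing, but each factor must still be some dispersion-free weight\<close>
  with semi_classical_ex_dispersion_free[OF assms(1)] semi_classical_ex_dispersion_free[OF assms(2)]
  show ?thesis unfolding outcomes_def by auto
next
  case False
  then obtain E0 F0 where E0: "E0 \<in> \<A>" and F0: "F0 \<in> \<B>" by blast
  define \<alpha> where "\<alpha> x = (\<Sum>\<^sub>\<infinity>y\<in>F0. \<omega> (x, y))" for x
  define \<beta> where "\<beta> y = (\<Sum>\<^sub>\<infinity>x\<in>E0. \<omega> (x, y))" for y
  note rectangle = non_signaling_dispersion_free_rectangle[OF assms(5,4) _ _ E0 F0,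
      folded \<alpha>_def \<beta>_def]
  have "dispersion_free \<A> \<alpha>"
    unfolding dispersion_free_iff by (metis rectangle F0)
  moreover have "dispersion_free \<B> \<beta>"
    unfolding dispersion_free_iff by (metis rectangle E0)
  moreover have "\<omega> (x, y) = \<alpha> x * \<beta> y" if xy: "x \<in> outcomes \<A>" "y \<in> outcomes \<B>" for x y
  proof -
    obtain E F where "E \<in> \<A>" "x \<in> E" "F \<in> \<B>" "y \<in> F"
      using xy unfolding outcomes_def by blast
    then show ?thesis by (metis rectangle)
  qed
  ultimately show ?thesis by blast
qed

end
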